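(* Let $\beta>0$, $\lambda_p,\lambda_k\in\mathbb R$, and let $s_1,\dots,s_n\in\{\pm1\}$ be a nonconstant sign pattern, $S_\pm=\{i:s_i=\pm1\}$, $n_\pm=|S_\pm|$. Let $K^*_{ij}=a_+$ for $i,j\in S_+$, $b_+$ for $i\in S_+,j\in S_-$, $b_-$ for $i\in S_-,j\in S_+$, $a_-$ for $i,j\in S_-$, where \[ a_+=\frac{e^{\beta\lambda_p}}{n_+e^{\beta\lambda_p}+n_-e^{-\beta\lambda_p}},\ b_+=\frac{e^{-\beta\lambda_p}}{n_+e^{\beta\lambda_p}+n_-e^{-\beta\lambda_p}},\ a_-=\frac{e^{\beta\lambda_p}}{n_-e^{\beta\lambda_p}+n_+e^{-\beta\lambda_p}},\ b_-=\frac{e^{-\beta\lambda_p}}{n_-e^{\beta\lambda_p}+n_+e^{-\beta\lambda_p}}, \] and let $\gamma_i=\lambda_ps_i\sum_jK^*_{ij}s_j$ (so $\gamma_i=\gamma_+:=\lambda_p(n_+a_+-n_-b_+)$ on $S_+$ and $\gamma_i=\gamma_-:=\lambda_p(n_-a_--n_+b_-)$ on $S_-$). Define $L_k:\mathbb R^n\to\mathbb R^n$ by $(L_kz)_i=-\gamma_iz_i+\lambda_k\sum_{j=1}^nK^*_{ij}z_j$. Then $\mathbb R^n=V_+\oplus V_-\oplus V_{\mathrm{mean}}$, where \[ V_\pm=\Big\{z: z_i=0\ \text{for } i\in S_\mp,\ \sum_{i\in S_\pm}z_i=0\Big\},\qquad V_{\mathrm{mean}}=\{z: z\text{ is constant on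 }S_+\text{ and constant on }S_-\}, \] and each of $V_+,V_-,V_{\mathrm{mean}}$ is invariant under $L_k$.
   Context: $L_k$ is the modewise (transverse direction $e_k$, $k\ne p$) linearization of the symmetric self-attention dynamics at the sign-split pure-mode equilibrium $x_i^*=s_ie_p$, where $\lambda_p,\lambda_k$ are eigenvalues of the symmetric interaction matrix. *)

theory Defs
  imports "HOL-Analysis.Analysis"
begin

text \<open>Sign pattern s :: 'n => real with values in {1,-1}; index type 'n is {1..n}.\<close>

definition Splus :: "('n::finite \<Rightarrow> real) \<Rightarrow> 'n set" where
  "Splus s = {i. s i = 1}"

definition Sminus :: "('n::finite \<Rightarrow> real) \<Rightarrow> 'n set" where
  "Sminus s = {i. s i = -1}"

definition npos :: "('n::finite \<Rightarrow> real) \<Rightarrow> real" where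
  "npos s = real (card (Splus s))"

definition nneg :: "('n::finite \<Rightarrow> real) \<Rightarrow> real" where
  "nneg s = real (card (Sminus s))"

definition apos :: "real \<Rightarrow> real \<Rightarrow> ('n::finite \<Rightarrow> real) \<Rightarrow> real" where
  "apos \<beta> lp s = exp (\<beta> * lp) / (npos s * exp (\<beta> * lp) + nneg s * exp (- \<beta> * lp))"

definition bpos :: "real \<Rightarrow> real \<Rightarrow> ('n::finite \<Rightarrow> real) \<Rightarrow> real" where
  "bpos \<beta> lp s = exp (- \<beta> * lp) / (npos s * exp (\<beta> * lp) + nneg s * exp (- \<beta> * lp))"

definition aneg :: "real \<Rightarrow> real \<Rightarrow> ('n::finite \<Rightarrow> real) \<Rightarrow> real" where
  "aneg \<beta> lp s = exp (\<beta> * lp) / (nneg s * exp (\<beta> * lp) + npos s * exp (- \<beta> * lp))"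

definition bneg :: "real \<Rightarrow> real \<Rightarrow> ('n::finite \<Rightarrow> real) \<Rightarrow> real" where
  "bneg \<beta> lp s = exp (- \<beta> * lp) / (nneg s * exp (\<beta> * lp) + npos s * exp (- \<beta> * lp))"

definition Kstar :: "real \<Rightarrow> real \<Rightarrow> ('n::finite \<Rightarrow> real) \<Rightarrow> 'n \<Rightarrow> 'n \<Rightarrow> real" where
  "Kstar \<beta> lp s i j =
     (if i \<in> Splus s then (if j \<in> Splus s then apos \<beta> lp s else bpos \<beta> lp s)
      else (if j \<in> Splus s then bneg \<beta> lp s else aneg \<beta> lp s))"

definition gam :: "real \<Rightarrow> real \<Rightarrow> ('n::finite \<Rightarrow> real) \<Rightarrow> 'n \<Rightarrow> real" where
  "gam \<beta> lp s i = lp * s i * (\<Sum>j\<in>UNIV. Kstar \<beta> lp s i j * s j)"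

definition Lk :: "real \<Rightarrow> real \<Rightarrow> real \<Rightarrow> ('n::finite \<Rightarrow> real) \<Rightarrow> real^'n \<Rightarrow> real^'n" where
  "Lk \<beta> lp lk s z = (\<chi> i. - gam \<beta> lp s i * z $ i + lk * (\<Sum>j\<in>UNIV. Kstar \<beta> lp s i j * z $ j))"

definition Vplus :: "('n::finite \<Rightarrow> real) \<Rightarrow> (real^'n) set" where
  "Vplus s = {z. (\<forall>i\<in>Sminus s. z $ i = 0) \<and> (\<Sum>i\<in>Splus s. z $ i) = 0}"

definition Vminus :: "('n::finite \<Rightarrow> real) \<Rightarrow> (real^'n) set" where
  "Vminus s = {z. (\<forall>i\<in>Splus s. z $ i = 0) \<and> (\<Sum>i\<in>Sminus s. z $ i) = 0}"

definition Vmean :: "('n::finite \<Rightarrow> real) \<Rightarrow> (real^'n) set" where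
  "Vmean s = {z. (\<forall>i\<in>Splus s. \<forall>j\<in>Splus s. z $ i = z $ j) \<and>
                 (\<forall>i\<in>Sminus s. \<forall>j\<in>Sminus s. z $ i = z $ j)}"

end

theory Submission
  imports Defs
begin

text \<open>A sign pattern splits the indices into \<open>P = S\<^sub>+\<close> and its complement; \<open>K\<^sup>*\<close> is
  constant on each block in each argument, and so is \<open>\<gamma>\<close>. So the kernel annihilates
  every vector supported in one block with zero sum there, and \<open>L\<^sub>k\<close> acts on \<open>V\<^sub>\<plusminus>\<close>
  as multiplication by \<open>-\<gamma>\<^sub>\<plusminus>\<close>; block-constant vectors are mapped to block-constant ones.
  The decomposition holds for any partition: subtracting from \<open>z\<close> its block averages
  leaves a vector with zero sum on both blocks.\<close>

definition blockwise_constant :: "'a set \<Rightarrow> ('a \<Rightarrow> 'b) \<Rightarrow> bool" where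
  "blockwise_constant P f \<longleftrightarrow> (\<forall>i j. (i \<in> P \<longleftrightarrow> j \<in> P) \<longrightarrow> f i = f j)"

definition zero_sum_block :: "'n::finite set \<Rightarrow> (real^'n) set" where
  "zero_sum_block P = {z. (\<forall>i\<in>-P. z $ i = 0) \<and> (\<Sum>i\<in>P. z $ i) = 0}"

definition blockwise_constant_vectors :: "'n::finite set \<Rightarrow> (real^'n) set" where
  "blockwise_constant_vectors P = {z. blockwise_constant P (($) z)}"

definition kernel_operator ::
    "('n::finite \<Rightarrow> real) \<Rightarrow> real \<Rightarrow> ('n \<Rightarrow> 'n \<Rightarrow> real) \<Rightarrow> real^'n \<Rightarrow> real^'n" where
  "kernel_operator g c K z = (\<chi> i. - g i * z $ i + c * (\<Sum>j\<in>UNIV. K i j * z $ j))"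

lemma blockwise_constantD:
  "blockwise_constant P f \<Longrightarrow> (i \<in> P \<longleftrightarrow> j \<in> P) \<Longrightarrow> f i = f j"
  unfolding blockwise_constant_def by blast

lemma blockwise_constant_Compl [simp]:
  "blockwise_constant (- P) f = blockwise_constant P f"
  unfolding blockwise_constant_def by simp

lemma blockwise_constant_iff:
  "blockwise_constant P f \<longleftrightarrow> (\<forall>i\<in>P. \<forall>j\<in>P. f i = f j) \<and> (\<forall>i\<in>-P. \<forall>j\<in>-P. f i = f j)"
  unfolding blockwise_constant_def by (metis ComplI ComplD)

lemma blockwise_constant_vectors_Compl [simp]:
  "blockwise_constant_vectors (- P) = blockwise_constant_vectors P"
  by (simp add: blockwise_constant_vectors_def)

lemma sum_blockwise_constant:
  fixes f :: "'a \<Rightarrow> real"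
  assumes "blockwise_constant P f" "i \<in> P"
  shows "(\<Sum>j\<in>P. f j) = real (card P) * f i"
proof -
  have "(\<Sum>j\<in>P. f j) = (\<Sum>j\<in>P. f i)"
    using assms by (intro sum.cong refl) (metis blockwise_constantD)
  then show ?thesis by simp
qed

lemma sum_blockwise_constant_mult_eq_0:
  fixes f z :: "'a \<Rightarrow> real"
  assumes "blockwise_constant P f" "(\<Sum>i\<in>P. z i) = 0"
  shows "(\<Sum>i\<in>P. f i * z i) = 0"
proof (cases "P = {}")
  case False
  then obtain p where "p \<in> P" by blast
  then have "(\<Sum>i\<in>P. f i * z i) = (\<Sum>i\<in>P. f p * z i)"
    using assms(1) by (intro sum.cong refl) (metis blockwise_constantD)
  with assms(2) show ?thesis
    by (simp add: sum_distrib_left[symmetric])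
qed simp

lemma subspace_zero_sum_block: "subspace (zero_sum_block P)"
  by (rule subspaceI) (auto simp: zero_sum_block_def sum.distrib sum_distrib_left[symmetric])

lemma subspace_blockwise_constant_vectors: "subspace (blockwise_constant_vectors P)"
proof (rule subspaceI)
  fix x y and c :: real
  assume x: "x \<in> blockwise_constant_vectors P" and y: "y \<in> blockwise_constant_vectors P"
  have "(x + y) $ i = (x + y) $ j" "(c *\<^sub>R x) $ i = (c *\<^sub>R x) $ j"
    if "i \<in> P \<longleftrightarrow> j \<in> P" for i j
  proof -
    have "x $ i = x $ j" "y $ i = y $ j"
      using x y that by (auto simp: blockwise_constant_vectors_def intro: blockwise_constantD)
    then show "(x + y) $ i = (x + y) $ j" "(c *\<^sub>R x) $ i = (c *\<^sub>R x) $ j"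
      by simp_all
  qed
  then show "x + y \<in> blockwise_constant_vectors P" "c *\<^sub>R x \<in> blockwise_constant_vectors P"
    unfolding blockwise_constant_vectors_def blockwise_constant_def by blast+
qed (simp add: blockwise_constant_vectors_def blockwise_constant_def)

lemma block_component_eq_0:
  assumes "u \<in> zero_sum_block P" "v \<in> zero_sum_block (- P)"
    and "w \<in> blockwise_constant_vectors P" "u + v + w = 0" "i \<in> P"
  shows "w $ i = 0"
proof -
  have "0 = (\<Sum>j\<in>P. (u + v + w) $ j)"
    using assms(4) by simp
  also have "\<dots> = (\<Sum>j\<in>P. u $ j) + (\<Sum>j\<in>P. v $ j) + (\<Sum>j\<in>P. w $ j)"
    by (simp add: sum.distrib)
  also have "\<dots> = real (card P) * w $ i"
    using assms(1-3,5) unfolding zero_sum_block_def blockwise_constant_vectors_def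
    by (simp add: sum_blockwise_constant)
  finally show ?thesis
    using assms(5) by (auto simp: card_eq_0_iff)
qed

lemma block_decomposition_independent:
  assumes "u \<in> zero_sum_block P" "v \<in> zero_sum_block (- P)"
    and "w \<in> blockwise_constant_vectors P" "u + v + w = 0"
  shows "u = 0 \<and> v = 0 \<and> w = 0"
proof -
  have "v + u + w = 0"
    using assms(4) by (simp add: algebra_simps)
  then have "w $ i = 0" for i
    using block_component_eq_0[OF assms, of i] block_component_eq_0[of v "- P" u w i] assms
    by (cases "i \<in> P") simp_all
  then have w: "w = 0" and uv: "u + v = 0"
    using assms(4) by (simp_all add: vec_eq_iff)
  have "u $ i = 0 \<and> v $ i = 0" for i
    using assms(1,2) uv[unfolded vec_eq_iff, rule_format, of i]
    by (cases "i \<in> P") (simp_all add: zero_sum_block_def)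
  with w show ?thesis
    by (simp add: vec_eq_iff)
qed

lemma sum_minus_average_eq_0:
  fixes z :: "'a \<Rightarrow> real"
  assumes "finite A"
  shows "(\<Sum>i\<in>A. z i - (\<Sum>j\<in>A. z j) / real (card A)) = 0"
  using assms by (cases "A = {}") (simp_all add: sum_subtractf)

lemma block_decomposition_exists:
  fixes z :: "real^'n::finite"
  shows "\<exists>u v w. u \<in> zero_sum_block P \<and> v \<in> zero_sum_block (- P)
    \<and> w \<in> blockwise_constant_vectors P \<and> z = u + v + w"
proof -
  define w where "w = (\<chi> i. if i \<in> P then (\<Sum>j\<in>P. z $ j) / real (card P)
                                  else (\<Sum>j\<in>-P. z $ j) / real (card (- P)))"
  define u where "u = (\<chi> i. if i \<in> P then z $ i - w $ i else 0)"
  define v where "v = (\<chi> i. if i \<in> P then 0 else z $ i - w $ i)"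
  have "u \<in> zero_sum_block P" "v \<in> zero_sum_block (- P)"
    using sum_minus_average_eq_0[of P "($) z"] sum_minus_average_eq_0[of "- P" "($) z"]
    by (simp_all add: zero_sum_block_def u_def v_def w_def)
  moreover have "w \<in> blockwise_constant_vectors P"
    by (simp add: blockwise_constant_vectors_def blockwise_constant_def w_def)
  moreover have "z = u + v + w"
    by (simp add: vec_eq_iff u_def v_def)
  ultimately show ?thesis by blast
qed

lemma block_direct_sum:
  fixes z :: "real^'n::finite"
  shows "\<exists>!(u, v, w). u \<in> zero_sum_block P \<and> v \<in> zero_sum_block (- P)
    \<and> w \<in> blockwise_constant_vectors P \<and> z = u + v + w"
proof -
  obtain u v w where uvw: "u \<in> zero_sum_block P" "v \<in> zero_sum_block (- P)"
      "w \<in> blockwise_constant_vectors P" "z = u + v + w"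
    using block_decomposition_exists by blast
  have "(u', v', w') = (u, v, w)"
    if "u' \<in> zero_sum_block P" "v' \<in> zero_sum_block (- P)"
      "w' \<in> blockwise_constant_vectors P" "z = u' + v' + w'" for u' v' w'
  proof -
    have "u' - u \<in> zero_sum_block P" "v' - v \<in> zero_sum_block (- P)"
      "w' - w \<in> blockwise_constant_vectors P"
      using that uvw subspace_zero_sum_block subspace_blockwise_constant_vectors
      by (blast intro: subspace_diff)+
    moreover have "(u' - u) + (v' - v) + (w' - w) = 0"
      using that(4) uvw(4) by (simp add: algebra_simps)
    ultimately show ?thesis
      using block_decomposition_independent by fastforce
  qed
  with uvw show ?thesis
    by (intro ex1I[of _ "(u, v, w)"]) auto
qed

lemma sum_UNIV_blockwise_constant_mult_eq_0:
  assumes "blockwise_constant P k" "z \<in> zero_sum_block P"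
  shows "(\<Sum>j\<in>UNIV. k j * z $ j) = 0"
proof -
  have "(\<Sum>j\<in>UNIV. k j * z $ j) = (\<Sum>j\<in>P. k j * z $ j) + (\<Sum>j\<in>-P. k j * z $ j)"
    using sum.Int_Diff[of UNIV _ P] by (simp add: Compl_eq_Diff_UNIV)
  also have "\<dots> = 0"
    using assms by (simp add: zero_sum_block_def sum_blockwise_constant_mult_eq_0)
  finally show ?thesis .
qed

lemma kernel_operator_zero_sum_block:
  assumes "blockwise_constant P g" "\<And>i. blockwise_constant P (K i)"
  shows "kernel_operator g c K ` zero_sum_block P \<subseteq> zero_sum_block P"
proof clarify
  fix z assume z: "z \<in> zero_sum_block P"
  have "kernel_operator g c K z $ i = - (g i * z $ i)" for i
    using sum_UNIV_blockwise_constant_mult_eq_0[OF assms(2) z] by (simp add: kernel_operator_def)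
  with z assms(1) show "kernel_operator g c K z \<in> zero_sum_block P"
    by (simp add: zero_sum_block_def sum_negf sum_blockwise_constant_mult_eq_0)
qed

lemma kernel_operator_blockwise_constant_vectors:
  assumes "blockwise_constant P g" "blockwise_constant P K"
  shows "kernel_operator g c K ` blockwise_constant_vectors P \<subseteq> blockwise_constant_vectors P"
proof clarify
  fix z assume z: "z \<in> blockwise_constant_vectors P"
  have "kernel_operator g c K z $ i = kernel_operator g c K z $ j" if "i \<in> P \<longleftrightarrow> j \<in> P" for i j
  proof -
    have "g i = g j" "K i = K j" "z $ i = z $ j"
      using assms z that by (auto simp: blockwise_constant_vectors_def intro: blockwise_constantD)
    then show ?thesis
      by (simp add: kernel_operator_def)
  qed
  then show "kernel_operator g c K z \<in> blockwise_constant_vectors P"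
    unfolding blockwise_constant_vectors_def blockwise_constant_def by blast
qed

theorem lemmaA2:
  fixes \<beta> lp lk :: real and s :: "'n::finite \<Rightarrow> real"
  assumes "\<beta> > 0"
    and "\<forall>i. s i = 1 \<or> s i = -1"
    and "\<exists>i j. s i \<noteq> s j"
  shows "subspace (Vplus s) \<and> subspace (Vminus s) \<and> subspace (Vmean s)
    \<and> (\<forall>z::real^'n. \<exists>!(u, v, w). u \<in> Vplus s \<and> v \<in> Vminus s \<and> w \<in> Vmean s \<and> z = u + v + w)
    \<and> Lk \<beta> lp lk s ` Vplus s \<subseteq> Vplus s
    \<and> Lk \<beta> lp lk s ` Vminus s \<subseteq> Vminus s
    \<and> Lk \<beta> lp lk s ` Vmean s \<subseteq> Vmean s"
proof -
  let ?P = "Splus s"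
  have Sminus: "Sminus s = - ?P"
    using assms(2) by (auto simp: Splus_def Sminus_def)
  have V: "Vplus s = zero_sum_block ?P" "Vminus s = zero_sum_block (- ?P)"
      "Vmean s = blockwise_constant_vectors ?P"
    by (simp_all add: Vplus_def Vminus_def Vmean_def zero_sum_block_def Sminus
        blockwise_constant_vectors_def blockwise_constant_iff)
  have L: "Lk \<beta> lp lk s = kernel_operator (gam \<beta> lp s) lk (Kstar \<beta> lp s)"
    by (simp add: fun_eq_iff Lk_def kernel_operator_def)
  have K_rows: "blockwise_constant ?P (Kstar \<beta> lp s)"
    and K_cols: "\<And>i. blockwise_constant ?P (Kstar \<beta> lp s i)"
    by (auto simp: blockwise_constant_def Kstar_def fun_eq_iff)
  have "s i = (if i \<in> ?P then 1 else -1)" for i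
    using assms(2) by (force simp: Splus_def)
  then have s_blocks: "blockwise_constant ?P s"
    unfolding blockwise_constant_def by simp
  have "gam \<beta> lp s i = gam \<beta> lp s j" if "i \<in> ?P \<longleftrightarrow> j \<in> ?P" for i j
    using blockwise_constantD[OF s_blocks that] blockwise_constantD[OF K_rows that]
    by (simp add: gam_def)
  then have gam: "blockwise_constant ?P (gam \<beta> lp s)"
    unfolding blockwise_constant_def by blast
  show ?thesis
    unfolding V L
    by (intro conjI allI subspace_zero_sum_block subspace_blockwise_constant_vectors
        block_direct_sum kernel_operator_zero_sum_block kernel_operator_blockwise_constant_vectors)
      (simp_all add: gam K_rows K_cols)
qed

end
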